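(* Let $n\ge2$, let $(\mathbb{R}^n,\mathfrak{g})$ be an asymptotically Euclidean manifold and $b\in L^1(\mathbb{R}_+)$, and assume hypothesis (H) with $\lambda$, $\phi$. Let $\varphi$ be the solution of $\varphi''-\lambda^2\tilde m^2(t)\varphi=0$ on $[0,\infty)$ given in the context, set $\psi(t,x)=\varphi(t)\phi(x)$, fix $R_1>0$, and let $D(t)=\{x:\int_0^{|x|}K(\tau)d\tau\le\eta(t)+R_1\}$. Then for every $q\ge1$, $$\int_{D(t)}\psi^q(t,x)\,dv_{\mathfrak{g}}\lesssim(t+1)^{\,n-1-\frac{n-1}{2}q},\qquad t\ge0,$$ with implicit constant independent of $t$.
   Context: Asymptotically Euclidean: $\mathfrak{g}=\mathfrak{g}_1+\mathfrak{g}_2$ with, in polar coordinates $x=r\omega$, $\mathfrak{g}_1=K^2(r)dr^2+r^2d\omega^2$, $|\partial_r^k(K-1)|\lesssim\langle r\rangle^{-k-\rho}$ ($k=0,1,2$, some $\rho>0$, $\langle r\rangle=\sqrt{1+r^2}$), and $\mathfrak{g}_2=g_{2,jk}dx^jdx^k$ with $\nabla^\beta g_{2,jk}=O(\langle r\rangle^{-\rho-1-|\beta|})$, $|\beta|\le2$; $dv_{\mathfrak{g}}$ is the Riemannian volume. Hypothesis (H): there exist $\lambda,c>0$ and a nonnegative nontrivial solution $\phi$ of $\Delta_{\mathfrak{g}}\phi=\lambda^2\phi$ on $\mathbb{R}^n$ with $0\le\phi(x)\le c\langle\lambda r\rangle^{-\frac{n-1}2}e^{\lambda\int_0^rK(\tau)d\tau}$.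 Change of time: $m(t)=e^{\int_0^tb(\tau)d\tau}$, $h(t)=\int_0^t\frac{d\tau}{m(\tau)}$, $\eta=h^{-1}$, $\tilde m(t)=m(\eta(t))$, $k=\exp(\int_0^\infty b)$. $\varphi$ is the solution of $\varphi''=\lambda^2\tilde m^2\varphi$ for which there exists $t_0\ge0$ with $(\varphi(t),\varphi'(t))=\big(1+o(1),\,-\lambda k+o(1)\big)e^{-\lambda\int_{t_0}^t\tilde m(\tau)d\tau}$ as $t\to\infty$. *)

theory Defs
  imports "HOL-Analysis.Analysis"
begin

definition jb :: "real \<Rightarrow> real" where
  "jb r = sqrt (1 + r\<^sup>2)"

definition pd :: "'n::finite \<Rightarrow> (real^'n \<Rightarrow> real) \<Rightarrow> real^'n \<Rightarrow> real" where
  "pd j f x = frechet_derivative f (at x) (axis j 1)"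

definition C2_Rn :: "(real^'n::finite \<Rightarrow> real) \<Rightarrow> bool" where
  "C2_Rn f \<longleftrightarrow> f differentiable_on UNIV \<and> (\<forall>j. pd j f differentiable_on UNIV)
      \<and> (\<forall>j k. continuous_on UNIV (pd j (pd k f)))"

definition riemannian_metric :: "(real^'n::finite \<Rightarrow> real^'n^'n) \<Rightarrow> bool" where
  "riemannian_metric g \<longleftrightarrow>
     (\<forall>x. transpose (g x) = g x \<and> (\<forall>v. v \<noteq> 0 \<longrightarrow> v \<bullet> (g x *v v) > 0))
   \<and> (\<forall>j k. C2_Rn (\<lambda>x. g x $ j $ k))"

text \<open>The metric \<open>K(r)^2 dr^2 + r^2 d\<omega>^2\<close> written in Cartesian coordinates at \<open>x \<noteq> 0\<close>:
  with \<open>\<omega> = x/|x|\<close>, \<open>dr = \<omega>\<cdot>dx\<close> and \<open>r^2 d\<omega>^2 = |dx|^2 - dr^2\<close>.\<close>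
definition polar_metric :: "(real \<Rightarrow> real) \<Rightarrow> real^'n::finite \<Rightarrow> real^'n^'n" where
  "polar_metric K x = (\<chi> j k. (K (norm x))\<^sup>2 * (x $ j / norm x) * (x $ k / norm x)
        + ((if j = k then 1 else 0) - (x $ j / norm x) * (x $ k / norm x)))"

definition vol_density :: "(real^'n::finite \<Rightarrow> real^'n^'n) \<Rightarrow> real^'n \<Rightarrow> real" where
  "vol_density g x = sqrt (det (g x))"

definition laplace_beltrami ::
  "(real^'n::finite \<Rightarrow> real^'n^'n) \<Rightarrow> (real^'n \<Rightarrow> real) \<Rightarrow> real^'n \<Rightarrow> real" where
  "laplace_beltrami g f x =
     (1 / vol_density g x) *
     (\<Sum>j\<in>UNIV. pd j (\<lambda>y. vol_density g y * (\<Sum>k\<in>UNIV. matrix_inv (g y) $ j $ k * pd k f y)) x)"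

definition mfun :: "(real \<Rightarrow> real) \<Rightarrow> real \<Rightarrow> real" where
  "mfun b t = exp (integral {0..t} b)"

definition hfun :: "(real \<Rightarrow> real) \<Rightarrow> real \<Rightarrow> real" where
  "hfun b t = integral {0..t} (\<lambda>\<tau>. 1 / mfun b \<tau>)"

definition etafun :: "(real \<Rightarrow> real) \<Rightarrow> real \<Rightarrow> real" where
  "etafun b = inv_into {0..} (hfun b)"

definition mtilde :: "(real \<Rightarrow> real) \<Rightarrow> real \<Rightarrow> real" where
  "mtilde b t = mfun b (etafun b t)"

definition kconst :: "(real \<Rightarrow> real) \<Rightarrow> real" where
  "kconst b = exp (integral {0..} b)"

end

theory Submission
  imports Defs "HOL-Real_Asymp.Real_Asymp"
begin

(* Because b is integrable, the change of time is bi-Lipschitz: eta(t) is comparable to t, and the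
   normalisation of varphi at infinity gives 0 <= varphi(t) <= A exp(-lam eta(t)).  With (H), the
   integrand is therefore at most a multiple of <r>^(-(n-1)q/2) exp(q lam (F(r) - eta(t) - R1)) on
   D(t), where r = |x| and F(r) = int_0^r K.  Since K -> 1, F grows at least like r/2 up to a
   constant, so if R is the radius of D(t) then F(r) - eta(t) - R1 <= C - (R - r)/2: the integrand
   is concentrated in a shell of bounded width near |x| = R.  Summing over unit shells, of volume
   O(R^(n-1)), bounds the integral by (1 + R)^(n-1-(n-1)q/2), and 1 + R is comparable to
   1 + eta(t) + R1, hence to t + 1.  The volume density is bounded because the entries of g are. *)

section \<open>Change of time\<close>

definition L1_norm :: "(real \<Rightarrow> real) \<Rightarrow> real" where
  "L1_norm b = integral {0..} (\<lambda>s. \<bar>b s\<bar>)"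

lemma hfun_0 [simp]: "hfun b 0 = 0"
  by (simp add: hfun_def)

lemma continuous_on_Ici_of_increment_le:
  fixes f :: "real \<Rightarrow> real"
  assumes "\<And>s s'. 0 \<le> s \<Longrightarrow> s \<le> s' \<Longrightarrow> 0 \<le> f s' - f s \<and> f s' - f s \<le> L * (s' - s)"
  shows "continuous_on {0..} f"
proof (rule lipschitz_on_continuous_on)
  show "lipschitz_on (max L 0) {0..} f"
  proof (rule lipschitz_onI)
    fix x y :: real assume "x \<in> {0..}" "y \<in> {0..}"
    then have "\<bar>f y - f x\<bar> \<le> L * \<bar>y - x\<bar>"
      using assms[of x y] assms[of y x] by (cases "x \<le> y") auto
    also have "\<dots> \<le> max L 0 * \<bar>y - x\<bar>"
      by (intro mult_right_mono) auto
    finally show "dist (f x) (f y) \<le> max L 0 * dist x y"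
      by (simp add: dist_real_def abs_minus_commute)
  qed simp
qed

locale time_change =
  fixes b :: "real \<Rightarrow> real"
  assumes integrable: "b absolutely_integrable_on {0..}"
begin

lemma abs_integral_le_L1_norm:
  assumes "0 \<le> t"
  shows "\<bar>integral {0..t} b\<bar> \<le> L1_norm b"
proof -
  have bt: "b absolutely_integrable_on {0..t}"
    by (rule absolutely_integrable_on_subinterval[OF integrable]) auto
  then have "\<bar>integral {0..t} b\<bar> \<le> integral {0..t} (\<lambda>s. \<bar>b s\<bar>)"
    using integral_norm_bound_integral[of b "{0..t}" "\<lambda>s. \<bar>b s\<bar>"]
    by (auto simp: absolutely_integrable_on_def)
  also have "\<dots> \<le> integral {0..} (\<lambda>s. \<bar>b s\<bar>)"
    using bt integrable by (intro integral_subset_le) (auto simp: absolutely_integrable_on_def)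
  finally show ?thesis
    unfolding L1_norm_def .
qed

lemma mfun_bounds:
  assumes "0 \<le> t"
  shows "exp (- L1_norm b) \<le> mfun b t" "mfun b t \<le> exp (L1_norm b)"
  using abs_integral_le_L1_norm[OF assms] by (auto simp: mfun_def)

lemma continuous_on_inverse_mfun: "continuous_on {0..T} (\<lambda>t. 1 / mfun b t)"
proof -
  have "b absolutely_integrable_on {0..T}"
    by (rule absolutely_integrable_on_subinterval[OF integrable]) auto
  then have "b integrable_on {0..T}"
    by (simp add: absolutely_integrable_on_def)
  then have "continuous_on {0..T} (mfun b)"
    unfolding mfun_def by (intro continuous_on_exp indefinite_integral_continuous_1)
  then show ?thesis
    by (intro continuous_on_divide continuous_on_const) (simp_all add: mfun_def)
qed

lemma hfun_increment_bounds:
  assumes "0 \<le> s" "s \<le> s'"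
  shows "exp (- L1_norm b) * (s' - s) \<le> hfun b s' - hfun b s"
    and "hfun b s' - hfun b s \<le> exp (L1_norm b) * (s' - s)"
proof -
  have int0: "(\<lambda>t. 1 / mfun b t) integrable_on {0..s'}"
    by (rule integrable_continuous_interval[OF continuous_on_inverse_mfun])
  then have int: "(\<lambda>t. 1 / mfun b t) integrable_on {s..s'}"
    by (rule integrable_on_subinterval) (use assms in auto)
  have diff: "hfun b s' - hfun b s = integral {s..s'} (\<lambda>t. 1 / mfun b t)"
    using Henstock_Kurzweil_Integration.integral_combine[OF assms int0] by (simp add: hfun_def)
  have bounds: "exp (- L1_norm b) \<le> 1 / mfun b t" "1 / mfun b t \<le> exp (L1_norm b)"
    if "t \<in> {s..s'}" for t
    using mfun_bounds[of t] that assms exp_gt_zero[of "integral {0..t} b"]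
    by (auto simp: exp_minus field_simps mfun_def)
  show "exp (- L1_norm b) * (s' - s) \<le> hfun b s' - hfun b s"
    using integral_le[OF integrable_const_ivl int bounds(1)] assms
    by (simp add: diff mult.commute)
  show "hfun b s' - hfun b s \<le> exp (L1_norm b) * (s' - s)"
    using integral_le[OF int integrable_const_ivl bounds(2)] assms
    by (simp add: diff mult.commute)
qed

lemma strict_mono_on_hfun: "strict_mono_on {0..} (hfun b)"
proof (rule strict_mono_onI)
  fix s s' :: real assume "s \<in> {0..}" "s' \<in> {0..}" "s < s'"
  then have "0 < exp (- L1_norm b) * (s' - s)"
    by simp
  also have "\<dots> \<le> hfun b s' - hfun b s"
    using \<open>s \<in> {0..}\<close> \<open>s < s'\<close> by (intro hfun_increment_bounds) auto
  finally show "hfun b s < hfun b s'"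
    by simp
qed

lemma continuous_on_hfun: "continuous_on {0..} (hfun b)"
proof (rule continuous_on_Ici_of_increment_le)
  fix s s' :: real assume "0 \<le> s" "s \<le> s'"
  moreover have "0 \<le> exp (- L1_norm b) * (s' - s)"
    using \<open>s \<le> s'\<close> by simp
  ultimately show "0 \<le> hfun b s' - hfun b s \<and> hfun b s' - hfun b s \<le> exp (L1_norm b) * (s' - s)"
    using hfun_increment_bounds[of s s'] by linarith
qed

lemma bij_betw_hfun: "bij_betw (hfun b) {0..} {0..}"
proof -
  have "t \<in> hfun b ` {0..}" if t: "0 \<le> t" for t
  proof -
    have "t \<le> hfun b (exp (L1_norm b) * t)"
      using hfun_increment_bounds(1)[of 0 "exp (L1_norm b) * t"] t
      by (simp add: exp_minus field_simps)
    moreover have "continuous_on {0..exp (L1_norm b) * t} (hfun b)"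
      by (rule continuous_on_subset[OF continuous_on_hfun]) auto
    ultimately obtain s where "0 \<le> s" "hfun b s = t"
      using IVT'[of "hfun b" 0 t "exp (L1_norm b) * t"] t by auto
    then show ?thesis by force
  qed
  moreover have "0 \<le> hfun b s" if "0 \<le> s" for s
    using strict_mono_onD[OF strict_mono_on_hfun, of 0 s] that by (cases "s = 0") auto
  ultimately have "hfun b ` {0..} = {0..}"
    by auto
  with strict_mono_on_imp_inj_on[OF strict_mono_on_hfun] show ?thesis
    by (simp add: bij_betw_def)
qed

lemma etafun_nonneg: "0 \<le> t \<Longrightarrow> 0 \<le> etafun b t"
  using bij_betw_inv_into[OF bij_betw_hfun] by (auto simp: etafun_def bij_betw_def)

lemma hfun_etafun: "0 \<le> t \<Longrightarrow> hfun b (etafun b t) = t"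
  using bij_betw_inv_into_right[OF bij_betw_hfun] by (simp add: etafun_def)

lemma etafun_hfun: "0 \<le> s \<Longrightarrow> etafun b (hfun b s) = s"
  using bij_betw_inv_into_left[OF bij_betw_hfun] by (simp add: etafun_def)

lemma etafun_0 [simp]: "etafun b 0 = 0"
  using etafun_hfun[of 0] by simp

lemma etafun_mono:
  assumes "0 \<le> t" "t \<le> t'"
  shows "etafun b t \<le> etafun b t'"
proof (rule ccontr)
  assume "\<not> etafun b t \<le> etafun b t'"
  then have "hfun b (etafun b t') < hfun b (etafun b t)"
    using assms by (intro strict_mono_onD[OF strict_mono_on_hfun]) (auto intro: etafun_nonneg)
  then show False
    using assms by (simp add: hfun_etafun)
qed

lemma etafun_increment_bounds:
  assumes "0 \<le> t" "t \<le> t'"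
  shows "exp (- L1_norm b) * (t' - t) \<le> etafun b t' - etafun b t"
    and "etafun b t' - etafun b t \<le> exp (L1_norm b) * (t' - t)"
  using hfun_increment_bounds[OF etafun_nonneg etafun_mono, OF assms(1) assms]
    hfun_etafun[of t] hfun_etafun[of t'] assms
  by (simp_all add: exp_minus field_simps)

lemma etafun_linear_bounds:
  assumes "0 \<le> t"
  shows "exp (- L1_norm b) * t \<le> etafun b t" "etafun b t \<le> exp (L1_norm b) * t"
  using etafun_increment_bounds[OF order_refl assms] by simp_all

lemma etafun_shift_comparable:
  assumes "0 \<le> t" "0 \<le> R1"
  shows "min 1 (exp (- L1_norm b)) * (t + 1) \<le> 1 + (etafun b t + R1)"
    and "1 + (etafun b t + R1) \<le> (1 + R1 + exp (L1_norm b)) * (t + 1)"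
proof -
  show "min 1 (exp (- L1_norm b)) * (t + 1) \<le> 1 + (etafun b t + R1)"
    using etafun_linear_bounds(1)[OF assms(1)] assms
      mult_right_mono[OF min.cobounded2[of 1 "exp (- L1_norm b)"] assms(1)]
    by (simp add: algebra_simps)
  have "(1 + R1 + exp (L1_norm b)) * (t + 1) = 1 + R1 + exp (L1_norm b) + t + R1 * t + exp (L1_norm b) * t"
    by (simp add: algebra_simps)
  then show "1 + (etafun b t + R1) \<le> (1 + R1 + exp (L1_norm b)) * (t + 1)"
    using etafun_linear_bounds(2)[OF assms(1)] mult_nonneg_nonneg[OF assms(2,1)] assms
      exp_ge_zero[of "L1_norm b"]
    by linarith
qed

lemma continuous_on_etafun: "continuous_on {0..} (etafun b)"
  by (rule continuous_on_Ici_of_increment_le) (use etafun_increment_bounds etafun_mono in auto)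

lemma etafun_has_real_derivative:
  assumes "0 < t"
  shows "(etafun b has_real_derivative mtilde b t) (at t)"
proof -
  have pos: "0 < etafun b t"
    using etafun_linear_bounds(1)[of t] assms
    by (meson exp_gt_zero less_le_trans less_imp_le mult_pos_pos)
  have "(hfun b has_real_derivative 1 / mfun b (etafun b t)) (at (etafun b t))"
  proof -
    have "(hfun b has_real_derivative 1 / mfun b (etafun b t)) (at (etafun b t) within {0..etafun b t + 1})"
      unfolding hfun_def using pos
      by (intro integral_has_real_derivative continuous_on_inverse_mfun) auto
    moreover have "at (etafun b t) within {0..etafun b t + 1} = at (etafun b t)"
      using pos by (intro at_within_interior) auto
    ultimately show ?thesis by simp
  qed
  then have "(etafun b has_real_derivative inverse (1 / mfun b (etafun b t))) (at t)"
  proof (rule DERIV_inverse_function[where a = 0 and b = "t + 1"])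
    show "1 / mfun b (etafun b t) \<noteq> 0"
      by (simp add: mfun_def)
    show "isCont (etafun b) t"
      using continuous_on_interior[OF continuous_on_etafun, of t] assms by (simp add: interior_Ici)
  qed (use assms hfun_etafun in auto)
  then show ?thesis
    by (simp add: mtilde_def)
qed

lemma integral_mtilde:
  assumes "0 \<le> a" "a \<le> t"
  shows "integral {a..t} (mtilde b) = etafun b t - etafun b a"
proof (rule integral_unique, rule fundamental_theorem_of_calculus_interior[OF assms(2)])
  show "continuous_on {a..t} (etafun b)"
    using continuous_on_subset[OF continuous_on_etafun] assms by auto
  show "(etafun b has_vector_derivative mtilde b x) (at x)" if "x \<in> {a<..<t}" for x
    using etafun_has_real_derivative[of x] that assms
    by (simp add: has_real_derivative_iff_has_vector_derivative)
qed

end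

section \<open>Decay of the time factor\<close>

lemma ode_solution_antimono:
  fixes v v' a :: "real \<Rightarrow> real"
  assumes cont: "continuous_on {z..} v" "continuous_on {z..} v'"
    and deriv: "\<And>t. z < t \<Longrightarrow> (v has_real_derivative v' t) (at t)"
    and deriv2: "\<And>t. z < t \<Longrightarrow> (v' has_real_derivative a t * v t) (at t)"
    and a_nonneg: "\<And>t. z < t \<Longrightarrow> 0 \<le> a t"
    and pos: "\<And>t. z < t \<Longrightarrow> 0 < v t"
    and lim: "(v' \<longlongrightarrow> 0) at_top"
    and "z \<le> s" "s \<le> t"
  shows "v t \<le> v s"
proof -
  \<comment> \<open>\<open>v'\<close> increases towards its limit \<open>0\<close>, so it stays nonpositive\<close>
  have v'_mono: "v' u \<le> v' w" if "z \<le> u" "u \<le> w" for u w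
  proof (rule DERIV_nonneg_imp_increasing_open[OF that(2)])
    show "continuous_on {u..w} v'"
      using that by (intro continuous_on_subset[OF cont(2)]) auto
  next
    fix x assume "u < x" "x < w"
    then show "\<exists>y. (v' has_real_derivative y) (at x) \<and> 0 \<le> y"
      using that deriv2[of x] a_nonneg[of x] pos[of x] by force
  qed
  have v'_nonpos: "v' u \<le> 0" if "z \<le> u" for u
  proof (rule ccontr)
    assume "\<not> v' u \<le> 0"
    then obtain W where "\<And>w. W \<le> w \<Longrightarrow> v' w < v' u"
      using order_tendstoD(2)[OF lim, of "v' u"] by (auto simp: eventually_at_top_linorder)
    then show False
      using v'_mono[OF that, of "max W u"] by (meson max.cobounded1 max.cobounded2 not_le)
  qed
  show ?thesis
  proof (rule DERIV_nonpos_imp_decreasing_open[OF \<open>s \<le> t\<close>])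
    show "continuous_on {s..t} v"
      using assms by (intro continuous_on_subset[OF cont(1)]) auto
  next
    fix x assume "s < x" "x < t"
    then show "\<exists>y. (v has_real_derivative y) (at x) \<and> y \<le> 0"
      using assms deriv[of x] v'_nonpos[of x] by force
  qed
qed

lemma ode_solution_nonneg:
  fixes v v' a :: "real \<Rightarrow> real"
  assumes cont: "continuous_on {0..} v" "continuous_on {0..} v'"
    and deriv: "\<And>t. 0 < t \<Longrightarrow> (v has_real_derivative v' t) (at t)"
    and deriv2: "\<And>t. 0 < t \<Longrightarrow> (v' has_real_derivative a t * v t) (at t)"
    and a_nonneg: "\<And>t. 0 < t \<Longrightarrow> 0 \<le> a t"
    and lim: "(v' \<longlongrightarrow> 0) at_top"
    and eventually_pos: "eventually (\<lambda>t. 0 < v t) at_top"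
    and "0 \<le> t1"
  shows "0 \<le> v t1"
proof (rule ccontr)
  assume neg: "\<not> 0 \<le> v t1"
  obtain T where T: "\<And>t. T \<le> t \<Longrightarrow> 0 < v t"
    using eventually_pos by (auto simp: eventually_at_top_linorder)
  define Z where "Z = {t1..} \<inter> v -` {..0}"
  have "Z \<noteq> {}"
    using neg by (auto simp: Z_def)
  moreover have "bdd_above Z"
  proof (rule bdd_aboveI)
    fix x assume "x \<in> Z"
    then show "x \<le> max T t1"
      using T[of x] by (force simp: Z_def)
  qed
  moreover have "closed Z"
    unfolding Z_def using \<open>0 \<le> t1\<close>
    by (intro continuous_closed_preimage continuous_on_subset[OF cont(1)]) auto
  ultimately have "Sup Z \<in> Z"
    by (rule closed_contains_Sup)
  define z where "z = Sup Z"
  have z: "t1 \<le> z" "0 \<le> z" "v z \<le> 0"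
    using \<open>Sup Z \<in> Z\<close> \<open>0 \<le> t1\<close> by (auto simp: Z_def z_def)
  have "v (max T (z + 1)) \<le> v z"
  proof (rule ode_solution_antimono[of z v v' a])
    show "0 < v s" if "z < s" for s
      using cSup_upper[OF _ \<open>bdd_above Z\<close>, of s] that z \<open>0 \<le> t1\<close> by (force simp: Z_def z_def)
  qed (use z cont deriv deriv2 a_nonneg lim in \<open>auto intro: continuous_on_subset\<close>)
  then show False
    using T[of "max T (z + 1)"] z by simp
qed

lemma bounded_by_decreasing_weight:
  fixes f w :: "real \<Rightarrow> real"
  assumes "continuous_on {0..} f"
    and w_antimono: "\<And>s t. 0 \<le> s \<Longrightarrow> s \<le> t \<Longrightarrow> w t \<le> w s"
    and w_pos: "\<And>t. 0 \<le> t \<Longrightarrow> 0 < w t"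
    and "eventually (\<lambda>t. f t \<le> C * w t) at_top"
  obtains A where "\<And>t. 0 \<le> t \<Longrightarrow> f t \<le> A * w t"
proof -
  obtain T0 where T0: "\<And>t. T0 \<le> t \<Longrightarrow> f t \<le> C * w t"
    using assms(4) by (auto simp: eventually_at_top_linorder)
  define T where "T = max T0 0"
  have T: "0 \<le> T" "\<And>t. T \<le> t \<Longrightarrow> f t \<le> C * w t"
    using T0 by (auto simp: T_def)
  have "bounded (f ` {0..T})"
    by (intro compact_imp_bounded compact_continuous_image continuous_on_subset[OF assms(1)]) auto
  then obtain M where M: "\<forall>y\<in>f ` {0..T}. norm y \<le> M"
    unfolding bounded_iff by blast
  define A where "A = \<bar>C\<bar> + \<bar>M\<bar> / w T"
  have "f t \<le> A * w t" if "0 \<le> t" for t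
  proof (cases "T \<le> t")
    case True
    have "C * w t \<le> \<bar>C\<bar> * w t"
      using w_pos[OF that] by (intro mult_right_mono) auto
    also have "\<dots> \<le> A * w t"
      using w_pos[OF that] w_pos[OF T(1)] by (intro mult_right_mono) (auto simp: A_def)
    finally show ?thesis
      using T(2)[OF True] by linarith
  next
    case False
    have "t \<in> {0..T}"
      using that False by auto
    then have "norm (f t) \<le> M"
      using M by blast
    then have "f t \<le> \<bar>M\<bar>"
      by auto
    also have "\<dots> = \<bar>M\<bar> / w T * w T"
      using w_pos[OF T(1)] by simp
    also have "\<dots> \<le> \<bar>M\<bar> / w T * w t"
      using that False w_pos[OF T(1)] w_antimono[of t T] by (intro mult_left_mono) auto
    also have "\<dots> \<le> A * w t"
      using w_pos[OF that] by (intro mult_right_mono) (auto simp: A_def)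
    finally show ?thesis .
  qed
  then show ?thesis
    by (rule that)
qed

context time_change
begin

lemma tendsto_exp_neg_etafun:
  assumes "0 < lam"
  shows "((\<lambda>t. exp (- lam * etafun b t)) \<longlongrightarrow> 0) at_top"
proof -
  have exp_lim: "((\<lambda>t. exp (- k * t)) \<longlongrightarrow> 0) at_top" if "0 < k" for k :: real
    using that by real_asymp
  have ev: "eventually (\<lambda>t. exp (- lam * etafun b t) \<le> exp (- (lam * exp (- L1_norm b)) * t)) at_top"
    using eventually_ge_at_top[of 0] by eventually_elim (use assms etafun_linear_bounds(1) in simp)
  show ?thesis
    by (rule tendsto_sandwich[OF _ ev tendsto_const exp_lim]) (use assms in auto)
qed

lemma time_solution_limits:
  fixes lam :: real and vphi vphi1 :: "real \<Rightarrow> real"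
  assumes "0 < lam"
    and "\<exists>t0\<ge>0.
          ((\<lambda>t. vphi t * exp (lam * integral {t0..t} (mtilde b))) \<longlongrightarrow> 1) at_top
        \<and> ((\<lambda>t. vphi1 t * exp (lam * integral {t0..t} (mtilde b))) \<longlongrightarrow> - lam * kconst b) at_top"
  obtains l where "0 < l" "((\<lambda>t. vphi t * exp (lam * etafun b t)) \<longlongrightarrow> l) at_top"
    and "(vphi1 \<longlongrightarrow> 0) at_top"
proof -
  obtain t0 where "0 \<le> t0"
    and lim1: "((\<lambda>t. vphi t * exp (lam * integral {t0..t} (mtilde b))) \<longlongrightarrow> 1) at_top"
    and lim2: "((\<lambda>t. vphi1 t * exp (lam * integral {t0..t} (mtilde b))) \<longlongrightarrow> - lam * kconst b) at_top"
    using assms(2) by blast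
  have E_eq: "eventually (\<lambda>t. exp (lam * integral {t0..t} (mtilde b))
      = exp (lam * etafun b t) / exp (lam * etafun b t0)) at_top"
    using eventually_ge_at_top[of t0]
    by eventually_elim (use \<open>0 \<le> t0\<close> in \<open>simp add: integral_mtilde right_diff_distrib exp_diff\<close>)
  have "((\<lambda>t. vphi t * exp (lam * etafun b t)) \<longlongrightarrow> exp (lam * etafun b t0)) at_top"
  proof (rule Lim_transform_eventually)
    show "((\<lambda>t. vphi t * exp (lam * integral {t0..t} (mtilde b)) * exp (lam * etafun b t0))
        \<longlongrightarrow> exp (lam * etafun b t0)) at_top"
      using tendsto_mult[OF lim1 tendsto_const] by simp
    show "eventually (\<lambda>t. vphi t * exp (lam * integral {t0..t} (mtilde b)) * exp (lam * etafun b t0)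
        = vphi t * exp (lam * etafun b t)) at_top"
      using E_eq by eventually_elim simp
  qed
  moreover have "(vphi1 \<longlongrightarrow> 0) at_top"
  proof (rule Lim_transform_eventually)
    show "((\<lambda>t. vphi1 t * exp (lam * integral {t0..t} (mtilde b))
        * (exp (lam * etafun b t0) * exp (- lam * etafun b t))) \<longlongrightarrow> 0) at_top"
      using tendsto_mult[OF lim2 tendsto_mult[OF tendsto_const tendsto_exp_neg_etafun[OF assms(1)]]]
      by simp
    show "eventually (\<lambda>t. vphi1 t * exp (lam * integral {t0..t} (mtilde b))
        * (exp (lam * etafun b t0) * exp (- lam * etafun b t)) = vphi1 t) at_top"
      using E_eq by eventually_elim (simp add: exp_minus field_simps)
  qed
  ultimately show ?thesis
    using that[of "exp (lam * etafun b t0)"] by simp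
qed

lemma time_solution_decay:
  fixes lam :: real and vphi vphi1 :: "real \<Rightarrow> real"
  assumes lam: "0 < lam"
    and vphi_ode: "\<forall>t\<ge>0. (vphi has_real_derivative vphi1 t) (at t within {0..})
                     \<and> (vphi1 has_real_derivative lam\<^sup>2 * (mtilde b t)\<^sup>2 * vphi t) (at t within {0..})"
    and vphi_asym: "\<exists>t0\<ge>0.
          ((\<lambda>t. vphi t * exp (lam * integral {t0..t} (mtilde b))) \<longlongrightarrow> 1) at_top
        \<and> ((\<lambda>t. vphi1 t * exp (lam * integral {t0..t} (mtilde b))) \<longlongrightarrow> - lam * kconst b) at_top"
  obtains A where "\<And>t. 0 \<le> t \<Longrightarrow> 0 \<le> vphi t"
    and "\<And>t. 0 \<le> t \<Longrightarrow> vphi t \<le> A * exp (- lam * etafun b t)"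
proof -
  obtain l where "0 < l" and lim: "((\<lambda>t. vphi t * exp (lam * etafun b t)) \<longlongrightarrow> l) at_top"
    and vphi1_lim: "(vphi1 \<longlongrightarrow> 0) at_top"
    using time_solution_limits[OF lam vphi_asym] by blast
  have cont: "continuous_on {0..} vphi" "continuous_on {0..} vphi1"
    using vphi_ode unfolding continuous_on_eq_continuous_within by (auto intro: DERIV_continuous)
  have at_eq: "at t within {0..} = at t" if "0 < t" for t :: real
    using that by (intro at_within_interior) (auto simp: interior_Ici)
  have nonneg: "0 \<le> vphi t" if "0 \<le> t" for t
  proof (rule ode_solution_nonneg[where a = "\<lambda>t. lam\<^sup>2 * (mtilde b t)\<^sup>2", OF cont _ _ _ vphi1_lim _ that])
    show "(vphi has_real_derivative vphi1 t) (at t)" if "0 < t" for t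
      using vphi_ode at_eq[OF that] that by (metis less_imp_le)
    show "(vphi1 has_real_derivative lam\<^sup>2 * (mtilde b t)\<^sup>2 * vphi t) (at t)" if "0 < t" for t
      using vphi_ode at_eq[OF that] that by (metis less_imp_le)
    show "eventually (\<lambda>t. 0 < vphi t) at_top"
      using order_tendstoD(1)[OF lim, of 0] \<open>0 < l\<close>
      by (auto elim: eventually_mono simp: zero_less_mult_iff)
  qed simp
  have "eventually (\<lambda>t. vphi t * exp (lam * etafun b t) < 2 * l) at_top"
    using order_tendstoD(2)[OF lim, of "2 * l"] \<open>0 < l\<close> by simp
  then have ev_bound: "eventually (\<lambda>t. vphi t \<le> 2 * l * exp (- lam * etafun b t)) at_top"
    by eventually_elim (simp add: exp_minus field_simps)
  obtain A where "\<And>t. 0 \<le> t \<Longrightarrow> vphi t \<le> A * exp (- lam * etafun b t)"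
    by (rule bounded_by_decreasing_weight[OF cont(1) _ _ ev_bound]) (use lam etafun_mono in auto)
  with nonneg show ?thesis
    by (rule that)
qed

end

section \<open>The bracket and the primitive of \<open>K\<close>\<close>

lemma jb_ge_1: "1 \<le> jb r"
  by (simp add: jb_def)

lemma jb_ge_abs: "\<bar>r\<bar> \<le> jb r"
  unfolding jb_def by (metis real_sqrt_abs real_sqrt_le_mono le_add_same_cancel2 zero_le_one)

lemma jb_powr_le_1: "a \<le> 0 \<Longrightarrow> jb r powr a \<le> 1"
  using powr_mono[of a 0 "jb r"] jb_ge_1[of r] by simp

lemma jb_mult_lower:
  assumes "0 < lam" "0 \<le> r"
  shows "min 1 lam / 2 * (1 + r) \<le> jb (lam * r)"
proof -
  have "min 1 lam * (1 + r) \<le> 1 + lam * r"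
    using assms by (simp add: distrib_left add_mono mult_right_mono)
  also have "\<dots> \<le> 2 * jb (lam * r)"
    using jb_ge_1[of "lam * r"] jb_ge_abs[of "lam * r"] by linarith
  finally show ?thesis
    by simp
qed

lemma mult_jb_powr_le_abs:
  assumes "0 \<le> a"
  shows "C * jb r powr (- a) \<le> \<bar>C\<bar>"
proof -
  have "C * jb r powr (- a) \<le> \<bar>C\<bar> * jb r powr (- a)"
    by (intro mult_right_mono) auto
  also have "\<dots> \<le> \<bar>C\<bar>"
    using jb_powr_le_1[of "- a" r] assms by (intro mult_left_le) auto
  finally show ?thesis .
qed

lemma asymptotically_one_bounds:
  fixes K :: "real \<Rightarrow> real"
  assumes "0 < \<rho>" and K: "\<forall>r\<ge>0. \<bar>K r - 1\<bar> \<le> C * jb r powr (- \<rho>)"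
  obtains M r0 where "\<And>r. 0 \<le> r \<Longrightarrow> \<bar>K r\<bar> \<le> M"
    and "0 \<le> r0" "\<And>r. r0 \<le> r \<Longrightarrow> 1/2 \<le> K r"
proof -
  have "((\<lambda>r. jb r powr (- \<rho>)) \<longlongrightarrow> 0) at_top"
    unfolding jb_def using \<open>0 < \<rho>\<close> by real_asymp
  then have "((\<lambda>r. C * jb r powr (- \<rho>)) \<longlongrightarrow> 0) at_top"
    by (rule tendsto_mult_right_zero)
  then have "eventually (\<lambda>r. C * jb r powr (- \<rho>) < 1/2) at_top"
    by (rule order_tendstoD) simp
  then obtain r0 where r0: "\<And>r. r0 \<le> r \<Longrightarrow> C * jb r powr (- \<rho>) < 1/2"
    unfolding eventually_at_top_linorder by blast
  show ?thesis
  proof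
    show "\<bar>K r\<bar> \<le> 1 + \<bar>C\<bar>" if "0 \<le> r" for r
      using K[rule_format, OF that] mult_jb_powr_le_abs[of \<rho> C r] \<open>0 < \<rho>\<close> by linarith
    show "1/2 \<le> K r" if "max r0 0 \<le> r" for r
    proof -
      have "0 \<le> r" "r0 \<le> r"
        using that by auto
      then show ?thesis
        using K r0[of r] by force
    qed
  qed auto
qed

lemma const_mult_length_le_integral:
  fixes K :: "real \<Rightarrow> real"
  assumes "continuous_on {r..s} K" "r \<le> s" "\<And>x. x \<in> {r..s} \<Longrightarrow> c \<le> K x"
  shows "c * (s - r) \<le> integral {r..s} K"
  using integral_le[OF integrable_const_ivl integrable_continuous_interval[OF assms(1)] assms(3)] assms(2)
  by (simp add: mult.commute)

lemma integral_le_const_mult_length: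
  fixes K :: "real \<Rightarrow> real"
  assumes "continuous_on {r..s} K" "r \<le> s" "\<And>x. x \<in> {r..s} \<Longrightarrow> K x \<le> c"
  shows "integral {r..s} K \<le> c * (s - r)"
  using integral_le[OF integrable_continuous_interval[OF assms(1)] integrable_const_ivl assms(3)] assms(2)
  by (simp add: mult.commute)

lemma integral_Icc_eventually_ge:
  fixes K :: "real \<Rightarrow> real"
  assumes cont: "continuous_on {0..} K" and M: "\<And>x. 0 \<le> x \<Longrightarrow> \<bar>K x\<bar> \<le> M"
    and r0: "0 \<le> r0" "\<And>x. r0 \<le> x \<Longrightarrow> \<delta> \<le> K x" and "0 \<le> \<delta>"
    and rs: "0 \<le> r" "r \<le> s"
  shows "\<delta> * (s - r) - (M + \<delta>) * r0 \<le> integral {r..s} K"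
proof -
  have cont_on: "continuous_on {u..v} K" if "0 \<le> u" for u v
    using that by (intro continuous_on_subset[OF cont]) auto
  have lower: "- M \<le> K x" if "0 \<le> x" for x
    using M[OF that] by linarith
  have "0 \<le> M + \<delta>"
    using M[OF r0(1)] \<open>0 \<le> \<delta>\<close> by linarith
  consider "s \<le> r0" | "r0 \<le> r" | "r < r0" "r0 < s"
    by linarith
  then show ?thesis
  proof cases
    case 1
    have "- M * (s - r) \<le> integral {r..s} K"
      using rs lower by (intro const_mult_length_le_integral cont_on) auto
    moreover have "(M + \<delta>) * (s - r) \<le> (M + \<delta>) * r0"
      using 1 rs \<open>0 \<le> M + \<delta>\<close> by (intro mult_left_mono) auto
    ultimately show ?thesis
      by (simp add: algebra_simps)
  next
    case 2
    have "\<delta> * (s - r) \<le> integral {r..s} K"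
      using rs 2 r0 by (intro const_mult_length_le_integral cont_on) auto
    moreover have "0 \<le> (M + \<delta>) * r0"
      using \<open>0 \<le> M + \<delta>\<close> r0(1) by simp
    ultimately show ?thesis
      by linarith
  next
    case 3
    have "- M * (r0 - r) \<le> integral {r..r0} K"
      using rs 3 lower by (intro const_mult_length_le_integral cont_on) auto
    moreover have "\<delta> * (s - r0) \<le> integral {r0..s} K"
      using 3 r0 by (intro const_mult_length_le_integral cont_on) auto
    moreover have "integral {r..r0} K + integral {r0..s} K = integral {r..s} K"
      using rs 3 by (intro Henstock_Kurzweil_Integration.integral_combine
          integrable_continuous_interval cont_on) auto
    moreover have "(M + \<delta>) * (r0 - r) \<le> (M + \<delta>) * r0"
      using rs \<open>0 \<le> M + \<delta>\<close> by (intro mult_left_mono) auto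
    ultimately show ?thesis
      by (simp add: algebra_simps)
  qed
qed

lemma integral_eventually_ge_growth:
  fixes K :: "real \<Rightarrow> real"
  assumes cont: "continuous_on {0..} K" and M: "\<And>x. 0 \<le> x \<Longrightarrow> \<bar>K x\<bar> \<le> M"
    and r0: "0 \<le> r0" "\<And>x. r0 \<le> x \<Longrightarrow> \<delta> \<le> K x" and "0 \<le> \<delta>"
    and rs: "0 \<le> r" "r \<le> s"
  shows "\<delta> * (s - r) - (M + \<delta>) * r0 \<le> integral {0..s} K - integral {0..r} K"
proof -
  have "integral {0..r} K + integral {r..s} K = integral {0..s} K"
    using rs continuous_on_subset[OF cont, of "{0..s}"]
    by (intro Henstock_Kurzweil_Integration.integral_combine integrable_continuous_interval) auto
  with integral_Icc_eventually_ge[OF assms] show ?thesis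
    by linarith
qed

lemma primitive_growth_bounds:
  fixes K :: "real \<Rightarrow> real"
  assumes K_cont: "continuous_on {0..} K" and "0 < \<rho>"
    and K_decay: "\<forall>r\<ge>0. \<bar>K r - 1\<bar> \<le> C * jb r powr (- \<rho>)"
  obtains M C' where "0 < M"
    and "\<And>T. continuous_on {0..T} (\<lambda>r. integral {0..r} K)"
    and "\<And>r s. 0 \<le> r \<Longrightarrow> r \<le> s \<Longrightarrow> 1/2 * (s - r) - C' \<le> integral {0..s} K - integral {0..r} K"
    and "\<And>r. 0 \<le> r \<Longrightarrow> integral {0..r} K \<le> M * r"
proof -
  obtain M r0 where K_bound: "\<And>r. 0 \<le> r \<Longrightarrow> \<bar>K r\<bar> \<le> M"
    and K_large: "0 \<le> r0" "\<And>r. r0 \<le> r \<Longrightarrow> 1/2 \<le> K r"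
    using asymptotically_one_bounds[OF \<open>0 < \<rho>\<close> K_decay] by metis
  show ?thesis
  proof
    show "0 < M"
      using K_bound[OF K_large(1)] K_large(2)[OF order_refl] by linarith
    show "continuous_on {0..T} (\<lambda>r. integral {0..r} K)" for T
      using continuous_on_subset[OF K_cont, of "{0..T}"]
      by (intro indefinite_integral_continuous_1 integrable_continuous_interval) auto
    show "1/2 * (s - r) - (M + 1/2) * r0 \<le> integral {0..s} K - integral {0..r} K"
      if "0 \<le> r" "r \<le> s" for r s
      using that K_large by (intro integral_eventually_ge_growth[OF K_cont K_bound]) auto
    show "integral {0..r} K \<le> M * r" if "0 \<le> r" for r
      using integral_le_const_mult_length[of 0 r K M] continuous_on_subset[OF K_cont, of "{0..r}"]
        K_bound that
      by (auto simp: abs_le_iff)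
  qed
qed

lemma sublevel_radius:
  fixes F :: "real \<Rightarrow> real"
  assumes cont: "\<And>T. continuous_on {0..T} F"
    and growth: "\<And>r s. 0 \<le> r \<Longrightarrow> r \<le> s \<Longrightarrow> \<delta> * (s - r) - C \<le> F s - F r"
    and "0 < \<delta>" "F 0 \<le> L"
  obtains R where "0 \<le> R" "\<delta> * R \<le> L - F 0 + C"
    and "\<And>r. 0 \<le> r \<Longrightarrow> F r \<le> L \<Longrightarrow> r \<le> R"
    and "\<And>r. 0 \<le> r \<Longrightarrow> F r \<le> L \<Longrightarrow> F r \<le> L - \<delta> * (R - r) + C"
proof -
  define T where "T = (L - F 0 + C) / \<delta>"
  define S where "S = {0..T} \<inter> F -` {..L}"
  have in_S: "r \<in> S" if "0 \<le> r" "F r \<le> L" for r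
    using growth[of 0 r] that \<open>0 < \<delta>\<close> by (auto simp: S_def T_def field_simps)
  have "0 \<in> S"
    using \<open>F 0 \<le> L\<close> by (simp add: in_S)
  have "bdd_above S"
    by (rule bdd_aboveI[of _ T]) (simp add: S_def)
  have "closed S"
    unfolding S_def by (intro continuous_closed_preimage cont) auto
  define R where "R = Sup S"
  have "R \<in> S"
    unfolding R_def using \<open>0 \<in> S\<close> \<open>bdd_above S\<close> \<open>closed S\<close> by (intro closed_contains_Sup) auto
  have le_R: "r \<le> R" if "r \<in> S" for r
    unfolding R_def using that \<open>bdd_above S\<close> by (rule cSup_upper)
  show ?thesis
  proof
    show "0 \<le> R"
      using le_R[OF \<open>0 \<in> S\<close>] .
    show "\<delta> * R \<le> L - F 0 + C"
      using \<open>R \<in> S\<close> \<open>0 < \<delta>\<close> by (simp add: S_def T_def field_simps)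
    show r_le: "r \<le> R" if "0 \<le> r" "F r \<le> L" for r
      using that by (intro le_R in_S)
    have "F R \<le> L"
      using \<open>R \<in> S\<close> by (simp add: S_def)
    then show "F r \<le> L - \<delta> * (R - r) + C" if "0 \<le> r" "F r \<le> L" for r
      using growth[OF \<open>0 \<le> r\<close> r_le[OF that]] by linarith
  qed
qed

section \<open>Boundedness of the volume density\<close>

lemma abs_det_le_entry_bound:
  fixes A :: "real^'n::finite^'n"
  assumes "\<And>i j. \<bar>A $ i $ j\<bar> \<le> G"
  shows "\<bar>det A\<bar> \<le> fact CARD('n) * G ^ CARD('n)"
proof -
  have "\<bar>det A\<bar> \<le> (\<Sum>p | p permutes (UNIV :: 'n set). \<bar>of_int (sign p) * (\<Prod>i\<in>UNIV. A $ i $ p i)\<bar>)"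
    unfolding det_def by (rule sum_abs)
  also have "\<dots> \<le> (\<Sum>p | p permutes (UNIV :: 'n set). G ^ CARD('n))"
  proof (rule sum_mono)
    fix p :: "'n \<Rightarrow> 'n"
    have "(\<Prod>i\<in>UNIV. \<bar>A $ i $ p i\<bar>) \<le> (\<Prod>i\<in>(UNIV :: 'n set). G)"
      using assms by (intro prod_mono) auto
    then show "\<bar>of_int (sign p) * (\<Prod>i\<in>UNIV. A $ i $ p i)\<bar> \<le> G ^ CARD('n)"
      by (simp add: abs_mult sign_def abs_prod)
  qed
  also have "\<dots> = fact CARD('n) * G ^ CARD('n)"
    by (simp add: card_permutations)
  finally show ?thesis .
qed

lemma polar_metric_entry_bound:
  assumes "\<bar>K (norm x)\<bar> \<le> M"
  shows "\<bar>polar_metric K x $ j $ k\<bar> \<le> M\<^sup>2 + 2"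
proof -
  define u where "u i = x $ i / norm x" for i
  have "\<bar>u i\<bar> \<le> 1" for i
    using component_le_norm_cart[of x i] by (cases "x = 0") (auto simp: u_def abs_divide divide_le_eq)
  then have uv: "\<bar>u j * u k\<bar> \<le> 1"
    by (simp add: abs_mult mult_le_one)
  have "(K (norm x))\<^sup>2 \<le> M\<^sup>2"
    using power_mono[OF assms abs_ge_zero, of 2] by simp
  moreover have "(K (norm x))\<^sup>2 * \<bar>u j * u k\<bar> \<le> (K (norm x))\<^sup>2"
    using uv by (intro mult_left_le) auto
  ultimately have "\<bar>(K (norm x))\<^sup>2 * (u j * u k)\<bar> \<le> M\<^sup>2"
    by (simp add: abs_mult)
  moreover have "\<bar>(if j = k then 1 else 0) - u j * u k\<bar> \<le> 2"
    using uv by (auto simp: abs_le_iff)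
  moreover have "polar_metric K x $ j $ k
      = (K (norm x))\<^sup>2 * (u j * u k) + ((if j = k then 1 else 0) - u j * u k)"
    by (simp add: polar_metric_def u_def)
  ultimately show ?thesis
    using abs_triangle_ineq[of "(K (norm x))\<^sup>2 * (u j * u k)" "(if j = k then 1 else 0) - u j * u k"]
    by linarith
qed

lemma vol_density_bounded:
  fixes g g2 :: "real^'n::finite \<Rightarrow> real^'n^'n"
  assumes decomp: "\<forall>x. x \<noteq> 0 \<longrightarrow> g x = polar_metric K x + g2 x" and "0 \<le> \<rho>"
    and K: "\<forall>r\<ge>0. \<bar>K r - 1\<bar> \<le> CK * jb r powr (- \<rho>)"
    and g2: "\<And>x j k. \<bar>g2 x $ j $ k\<bar> \<le> C2 * jb (norm x) powr (- \<rho> - 1)"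
  obtains V where "\<And>x. vol_density g x \<le> V"
proof
  define G where "G = (1 + \<bar>CK\<bar>)\<^sup>2 + 2 + \<bar>C2\<bar>"
  fix x
  show "vol_density g x \<le> max (sqrt (fact CARD('n) * G ^ CARD('n))) (vol_density g 0)"
  proof (cases "x = 0")
    case False
    have K_bound: "\<bar>K (norm x)\<bar> \<le> 1 + \<bar>CK\<bar>"
      using K[rule_format, OF norm_ge_zero[of x]] mult_jb_powr_le_abs[OF \<open>0 \<le> \<rho>\<close>, of CK "norm x"] by linarith
    have "\<bar>g x $ j $ k\<bar> \<le> G" for j k
    proof -
      have "\<bar>g2 x $ j $ k\<bar> \<le> \<bar>C2\<bar>"
        using g2[of x j k] mult_jb_powr_le_abs[of "\<rho> + 1" C2 "norm x"] \<open>0 \<le> \<rho>\<close> by simp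
      moreover have "g x $ j $ k = polar_metric K x $ j $ k + g2 x $ j $ k"
        using decomp False by simp
      ultimately show ?thesis
        using polar_metric_entry_bound[where K = K and x = x, OF K_bound, of j k]
          abs_triangle_ineq[of "polar_metric K x $ j $ k" "g2 x $ j $ k"]
        by (simp add: G_def)
    qed
    then have "det (g x) \<le> fact CARD('n) * G ^ CARD('n)"
      using abs_det_le_entry_bound[of "g x" G] by simp
    then show ?thesis
      by (simp add: vol_density_def le_max_iff_disj)
  qed simp
qed

section \<open>Integrals of functions concentrated near a sphere\<close>

lemma power_diff_le_mult:
  fixes x y :: real
  assumes "0 \<le> y" "y \<le> x"
  shows "x ^ n - y ^ n \<le> real n * x ^ (n - 1) * (x - y)"
proof -
  have "(\<Sum>i<n. y ^ (n - Suc i) * x ^ i) \<le> (\<Sum>i<n. x ^ (n - Suc i) * x ^ i)"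
    using assms by (intro sum_mono mult_right_mono power_mono) auto
  also have "\<dots> = real n * x ^ (n - 1)"
    by (simp add: power_add[symmetric])
  finally show ?thesis
    using power_diff_sumr2[of x n y] assms by (simp add: mult_left_mono mult.commute)
qed

lemma emeasure_shell_le:
  fixes c :: "'a::euclidean_space"
  assumes "0 \<le> r"
  shows "emeasure lborel (ball c (r + 1) - ball c r)
    \<le> ennreal (DIM('a) * unit_ball_vol DIM('a) * (r + 1) ^ (DIM('a) - 1))"
proof -
  let ?\<omega> = "unit_ball_vol DIM('a)"
  have "emeasure lborel (ball c (r + 1) - ball c r) = emeasure lborel (ball c (r + 1)) - emeasure lborel (ball c r)"
    using assms by (intro emeasure_Diff) (auto simp: emeasure_ball)
  also have "\<dots> = ennreal (?\<omega> * (r + 1) ^ DIM('a) - ?\<omega> * r ^ DIM('a))"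
    using assms by (simp add: emeasure_ball ennreal_minus power_mono)
  also have "\<dots> \<le> ennreal (DIM('a) * ?\<omega> * (r + 1) ^ (DIM('a) - 1))"
    using power_diff_le_mult[of r "r + 1" "DIM('a)"] assms
    by (intro ennreal_leI) (simp add: right_diff_distrib[symmetric] mult_left_mono mult.assoc)
  finally show ?thesis .
qed

lemma summable_powr_mult_exp:
  fixes p \<gamma> :: real
  assumes "0 < \<gamma>"
  shows "summable (\<lambda>j::nat. (real j + 1) powr p * exp (- \<gamma> * real j))"
proof (rule summable_comparison_test_bigo)
  show "summable (\<lambda>j. norm (exp (- \<gamma> / 2) ^ j))"
    using assms by (simp add: summable_geometric)
  show "(\<lambda>j::nat. (real j + 1) powr p * exp (- \<gamma> * real j)) \<in> O(\<lambda>j. exp (- \<gamma> / 2) ^ j)"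
    using assms by real_asymp
qed

lemma peetre_inequality_nat:
  fixes k n :: nat
  assumes "k \<le> n"
  shows "(real k + 1) powr \<beta> \<le> (real n + 1) powr \<beta> * (real (n - k) + 1) powr \<bar>\<beta>\<bar>"
proof (cases "0 \<le> \<beta>")
  case True
  have "(real k + 1) powr \<beta> \<le> (real n + 1) powr \<beta>"
    using True assms by (intro powr_mono2) auto
  also have "\<dots> \<le> (real n + 1) powr \<beta> * (real (n - k) + 1) powr \<bar>\<beta>\<bar>"
    by (simp add: ge_one_powr_ge_zero mult_le_cancel_left1)
  finally show ?thesis .
next
  case False
  have "real n + 1 \<le> (real k + 1) * (real (n - k) + 1)"
    using assms by (simp add: of_nat_diff algebra_simps mult_left_mono)
  then have "(real k + 1) powr \<beta> \<le> ((real n + 1) / (real (n - k) + 1)) powr \<beta>"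
    using False by (intro powr_mono2') (auto simp: field_simps)
  also have "\<dots> = (real n + 1) powr \<beta> / (real (n - k) + 1) powr \<beta>"
    by (rule powr_divide)
  also have "\<dots> = (real n + 1) powr \<beta> * (real (n - k) + 1) powr \<bar>\<beta>\<bar>"
    using False by (simp add: powr_minus_divide)
  finally show ?thesis .
qed

lemma exp_weighted_sum_bound:
  fixes \<beta> \<gamma> :: real
  assumes "0 < \<gamma>"
  obtains S where "0 \<le> S"
    and "\<And>n. (\<Sum>k\<le>n. (real k + 1) powr \<beta> * exp (- \<gamma> * (real n - real k))) \<le> S * (real n + 1) powr \<beta>"
proof
  define a where "a j = (real j + 1) powr \<bar>\<beta>\<bar> * exp (- \<gamma> * real j)" for j :: nat
  have "summable a"
    unfolding a_def using assms by (rule summable_powr_mult_exp)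
  have a_nonneg: "0 \<le> a j" for j
    by (simp add: a_def)
  show "0 \<le> suminf a"
    using \<open>summable a\<close> a_nonneg by (rule suminf_nonneg)
  fix n :: nat
  have reindex: "(\<Sum>k\<le>n. a (n - k)) = (\<Sum>k\<le>n. a k)"
    using sum.atLeastAtMost_rev[of "\<lambda>k. a (n - k)" 0 n] by (simp add: atMost_atLeast0)
  have "(\<Sum>k\<le>n. (real k + 1) powr \<beta> * exp (- \<gamma> * (real n - real k)))
      \<le> (\<Sum>k\<le>n. (real n + 1) powr \<beta> * a (n - k))"
  proof (rule sum_mono)
    fix k assume "k \<in> {..n}"
    then show "(real k + 1) powr \<beta> * exp (- \<gamma> * (real n - real k)) \<le> (real n + 1) powr \<beta> * a (n - k)"
      using peetre_inequality_nat[of k n \<beta>] by (auto simp: a_def of_nat_diff mult_right_mono)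
  qed
  also have "\<dots> = (real n + 1) powr \<beta> * (\<Sum>k\<le>n. a k)"
    by (simp only: sum_distrib_left[symmetric] reindex)
  also have "\<dots> \<le> (real n + 1) powr \<beta> * suminf a"
    using \<open>summable a\<close> a_nonneg by (intro mult_left_mono sum_le_suminf) auto
  finally show "(\<Sum>k\<le>n. (real k + 1) powr \<beta> * exp (- \<gamma> * (real n - real k))) \<le> suminf a * (real n + 1) powr \<beta>"
    by (simp add: mult.commute)
qed

lemma floor_plus_one_powr_le:
  fixes R \<beta> :: real
  assumes "0 \<le> R"
  shows "(real (nat \<lfloor>R\<rfloor>) + 1) powr \<beta> \<le> 2 powr \<bar>\<beta>\<bar> * (1 + R) powr \<beta>"
proof -
  define X where "X = real (nat \<lfloor>R\<rfloor>) + 1"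
  have "X \<le> 1 + R" "R < X" "1 \<le> X"
    using assms by (simp_all add: X_def)
  then have X: "X \<le> 1 + R" "(1 + R) / 2 \<le> X" "1 \<le> X"
    by simp_all
  show ?thesis
  proof (cases "0 \<le> \<beta>")
    case True
    have "X powr \<beta> \<le> (1 + R) powr \<beta>"
      using True X by (intro powr_mono2) auto
    also have "\<dots> \<le> 2 powr \<bar>\<beta>\<bar> * (1 + R) powr \<beta>"
      by (simp add: ge_one_powr_ge_zero mult_le_cancel_right1)
    finally show ?thesis
      by (simp add: X_def)
  next
    case False
    have "X powr \<beta> \<le> ((1 + R) / 2) powr \<beta>"
      using False X assms by (intro powr_mono2') auto
    also have "\<dots> = (1 + R) powr \<beta> / 2 powr \<beta>"
      by (rule powr_divide)
    also have "\<dots> = 2 powr \<bar>\<beta>\<bar> * (1 + R) powr \<beta>"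
      using False by (simp add: powr_minus_divide)
    finally show ?thesis
      by (simp add: X_def)
  qed
qed

lemma nn_integral_le_shell_sum:
  fixes f :: "'a::euclidean_space \<Rightarrow> real" and s :: "nat \<Rightarrow> real"
  assumes "0 \<le> R"
    and outside: "\<And>x. R < norm x \<Longrightarrow> f x \<le> 0"
    and inside: "\<And>x. norm x \<le> R \<Longrightarrow> f x \<le> s (nat \<lfloor>norm x\<rfloor>)"
    and s_nonneg: "\<And>k. 0 \<le> s k"
  shows "(\<integral>\<^sup>+x. ennreal (f x) \<partial>lborel)
    \<le> ennreal (\<Sum>k\<le>nat \<lfloor>R\<rfloor>. s k * (DIM('a) * unit_ball_vol DIM('a) * (real k + 1) ^ (DIM('a) - 1)))"
proof -
  define shell where "shell k = ball (0::'a) (real k + 1) - ball 0 (real k)" for k :: nat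
  define v where "v k = DIM('a) * unit_ball_vol DIM('a) * (real k + 1) ^ (DIM('a) - 1)" for k :: nat
  have shell_sets: "shell k \<in> sets lborel" for k
    by (auto simp: shell_def)
  have v_nonneg: "0 \<le> v k" for k
    by (simp add: v_def)
  have pointwise: "ennreal (f x) \<le> (\<Sum>k\<le>nat \<lfloor>R\<rfloor>. ennreal (s k) * indicator (shell k) x)" for x
  proof (cases "norm x \<le> R")
    case True
    define k where "k = nat \<lfloor>norm x\<rfloor>"
    have "x \<in> shell k" "k \<le> nat \<lfloor>R\<rfloor>"
      using True by (auto simp: shell_def k_def nat_mono floor_mono) linarith+
    then have "ennreal (s k) * indicator (shell k) x \<le> (\<Sum>k\<le>nat \<lfloor>R\<rfloor>. ennreal (s k) * indicator (shell k) x)"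
      by (intro member_le_sum) auto
    then show ?thesis
      using inside[OF True] \<open>x \<in> shell k\<close> by (auto simp: k_def intro: order_trans ennreal_leI)
  qed (use outside ennreal_neg in auto)
  have "(\<integral>\<^sup>+x. ennreal (f x) \<partial>lborel)
      \<le> (\<integral>\<^sup>+x. (\<Sum>k\<le>nat \<lfloor>R\<rfloor>. ennreal (s k) * indicator (shell k) x) \<partial>lborel)"
    by (intro nn_integral_mono pointwise)
  also have "\<dots> = (\<Sum>k\<le>nat \<lfloor>R\<rfloor>. \<integral>\<^sup>+x. ennreal (s k) * indicator (shell k) x \<partial>lborel)"
    by (rule nn_integral_sum) (use shell_sets in auto)
  also have "\<dots> = (\<Sum>k\<le>nat \<lfloor>R\<rfloor>. ennreal (s k) * emeasure lborel (shell k))"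
    by (intro sum.cong refl nn_integral_cmult_indicator shell_sets)
  also have "\<dots> \<le> (\<Sum>k\<le>nat \<lfloor>R\<rfloor>. ennreal (s k * v k))"
    using emeasure_shell_le[of "real k" "0::'a" for k] s_nonneg v_nonneg
    by (intro sum_mono) (simp add: shell_def v_def ennreal_mult mult_left_mono)
  also have "\<dots> = ennreal (\<Sum>k\<le>nat \<lfloor>R\<rfloor>. s k * v k)"
    using s_nonneg v_nonneg by (intro sum_ennreal) auto
  finally show ?thesis
    by (simp add: v_def)
qed

lemma radial_profile_le_floor:
  fixes r R \<alpha> \<gamma> D :: real
  assumes "0 \<le> \<alpha>" "0 \<le> \<gamma>" "0 \<le> D" "0 \<le> r"
  shows "D * (1 + r) powr (- \<alpha>) * exp (- \<gamma> * (R - r))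
    \<le> D * (real (nat \<lfloor>r\<rfloor>) + 1) powr (- \<alpha>) * exp (- \<gamma> * (R - real (nat \<lfloor>r\<rfloor>) - 1))"
proof -
  define k where "k = nat \<lfloor>r\<rfloor>"
  have k: "0 < real k + 1" "real k + 1 \<le> 1 + r" "r \<le> real k + 1"
    unfolding k_def using assms(4) by linarith+
  have "(1 + r) powr (- \<alpha>) \<le> (real k + 1) powr (- \<alpha>)"
    by (rule powr_mono2') (use assms k in linarith)+
  moreover have "- \<gamma> * (R - r) \<le> - \<gamma> * (R - real k - 1)"
    using mult_left_mono[OF k(3) \<open>0 \<le> \<gamma>\<close>] by (simp add: algebra_simps)
  ultimately show ?thesis
    unfolding k_def[symmetric] using \<open>0 \<le> D\<close> by (intro mult_mono mult_left_mono) auto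
qed

lemma shell_term_le:
  fixes k n d :: nat and c \<alpha> \<gamma> R :: real
  assumes "0 \<le> c" "0 \<le> \<gamma>" "1 \<le> d" "real n \<le> R"
  shows "c * (real k + 1) powr (- \<alpha>) * exp (- \<gamma> * (R - real k - 1)) * (real k + 1) ^ (d - 1)
    \<le> c * exp \<gamma> * ((real k + 1) powr (real d - 1 - \<alpha>) * exp (- \<gamma> * (real n - real k)))"
proof -
  have pow: "(real k + 1) powr (- \<alpha>) * (real k + 1) ^ (d - 1) = (real k + 1) powr (real d - 1 - \<alpha>)"
    using assms(3) by (simp add: powr_realpow[symmetric] of_nat_diff powr_add[symmetric])
  have "exp (- \<gamma> * (R - real k - 1)) \<le> exp \<gamma> * exp (- \<gamma> * (real n - real k))"
    using mult_left_mono[OF assms(4) assms(2)] by (simp add: algebra_simps flip: exp_add)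
  then have "c * ((real k + 1) powr (- \<alpha>) * (real k + 1) ^ (d - 1)) * exp (- \<gamma> * (R - real k - 1))
      \<le> c * (real k + 1) powr (real d - 1 - \<alpha>) * (exp \<gamma> * exp (- \<gamma> * (real n - real k)))"
    unfolding pow using assms(1) by (intro mult_left_mono) auto
  then show ?thesis
    by (simp only: mult_ac)
qed

lemma nn_integral_radial_decay_le:
  fixes \<alpha> \<gamma> D :: real
  assumes "0 \<le> \<alpha>" "0 < \<gamma>" "0 \<le> D"
  obtains Cst where "\<And>(f :: 'a::euclidean_space \<Rightarrow> real) R. 0 \<le> R \<Longrightarrow>
      (\<And>x. R < norm x \<Longrightarrow> f x \<le> 0) \<Longrightarrow>
      (\<And>x. norm x \<le> R \<Longrightarrow> f x \<le> D * (1 + norm x) powr (- \<alpha>) * exp (- \<gamma> * (R - norm x))) \<Longrightarrow>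
      (\<integral>\<^sup>+x. ennreal (f x) \<partial>lborel) \<le> ennreal (Cst * (1 + R) powr (real DIM('a) - 1 - \<alpha>))"
proof -
  define \<beta> where "\<beta> = real DIM('a) - 1 - \<alpha>"
  define c where "c = D * DIM('a) * unit_ball_vol DIM('a)"
  have "0 \<le> c"
    using \<open>0 \<le> D\<close> by (simp add: c_def)
  obtain S where "0 \<le> S"
    and S: "\<And>n. (\<Sum>k\<le>n. (real k + 1) powr \<beta> * exp (- \<gamma> * (real n - real k))) \<le> S * (real n + 1) powr \<beta>"
    using exp_weighted_sum_bound[OF \<open>0 < \<gamma>\<close>] by blast
  show ?thesis
  proof
    fix f :: "'a \<Rightarrow> real" and R :: real
    assume "0 \<le> R" and outside: "\<And>x. R < norm x \<Longrightarrow> f x \<le> 0"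
      and inside: "\<And>x. norm x \<le> R \<Longrightarrow> f x \<le> D * (1 + norm x) powr (- \<alpha>) * exp (- \<gamma> * (R - norm x))"
    define n where "n = nat \<lfloor>R\<rfloor>"
    define s where "s k = D * (real k + 1) powr (- \<alpha>) * exp (- \<gamma> * (R - real k - 1))" for k :: nat
    have "(\<integral>\<^sup>+x. ennreal (f x) \<partial>lborel)
        \<le> ennreal (\<Sum>k\<le>n. s k * (DIM('a) * unit_ball_vol DIM('a) * (real k + 1) ^ (DIM('a) - 1)))"
    proof (unfold n_def, rule nn_integral_le_shell_sum[OF \<open>0 \<le> R\<close> outside])
      show "f x \<le> s (nat \<lfloor>norm x\<rfloor>)" if "norm x \<le> R" for x
        using order_trans[OF inside[OF that] radial_profile_le_floor[OF assms(1) less_imp_le[OF assms(2)]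
              assms(3) norm_ge_zero]]
        by (simp add: s_def)
    qed (use \<open>0 \<le> D\<close> in \<open>auto simp: s_def intro!: mult_nonneg_nonneg\<close>)
    also have "\<dots> \<le> ennreal (c * exp \<gamma> * (\<Sum>k\<le>n. (real k + 1) powr \<beta> * exp (- \<gamma> * (real n - real k))))"
    proof (intro ennreal_leI, unfold sum_distrib_left, rule sum_mono)
      fix k assume "k \<in> {..n}"
      have "real n \<le> R"
        using \<open>0 \<le> R\<close> by (simp add: n_def)
      then show "s k * (DIM('a) * unit_ball_vol DIM('a) * (real k + 1) ^ (DIM('a) - 1))
          \<le> c * exp \<gamma> * ((real k + 1) powr \<beta> * exp (- \<gamma> * (real n - real k)))"
        using shell_term_le[OF \<open>0 \<le> c\<close> less_imp_le[OF \<open>0 < \<gamma>\<close>], of "DIM('a)" n R k \<alpha>]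
        by (simp add: s_def c_def \<beta>_def DIM_positive Suc_leI ac_simps)
    qed
    also have "\<dots> \<le> ennreal (c * exp \<gamma> * (S * (2 powr \<bar>\<beta>\<bar> * (1 + R) powr \<beta>)))"
      using order_trans[OF S[of n, unfolded n_def]
          mult_left_mono[OF floor_plus_one_powr_le[OF \<open>0 \<le> R\<close>] \<open>0 \<le> S\<close>]] \<open>0 \<le> c\<close>
      by (intro ennreal_leI mult_left_mono) (auto simp: n_def)
    finally show "(\<integral>\<^sup>+x. ennreal (f x) \<partial>lborel)
        \<le> ennreal (c * exp \<gamma> * S * 2 powr \<bar>\<beta>\<bar> * (1 + R) powr (real DIM('a) - 1 - \<alpha>))"
      by (simp add: \<beta>_def mult.assoc)
  qed
qed

lemma powr_le_of_comparable:
  fixes x y a b \<beta> :: real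
  assumes "0 < a" "0 < x" "a * x \<le> y" "y \<le> b * x"
  shows "y powr \<beta> \<le> (a powr \<beta> + b powr \<beta>) * x powr \<beta>"
proof (cases "0 \<le> \<beta>")
  case True
  have "0 < a * x"
    using assms by simp
  then have "0 \<le> y"
    using assms by linarith
  then have "y powr \<beta> \<le> (b * x) powr \<beta>"
    using True assms by (intro powr_mono2) auto
  then show ?thesis
    by (simp add: powr_mult distrib_right add_increasing)
next
  case False
  have "y powr \<beta> \<le> (a * x) powr \<beta>"
    using False assms by (intro powr_mono2') auto
  then show ?thesis
    by (simp add: powr_mult distrib_right add_increasing2)
qed

lemma sublevel_profile_le:
  fixes F :: "real \<Rightarrow> real"
  assumes R_le: "\<And>r. 0 \<le> r \<Longrightarrow> F r \<le> L \<Longrightarrow> r \<le> R"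
    and F_le: "\<And>r. 0 \<le> r \<Longrightarrow> F r \<le> L \<Longrightarrow> F r \<le> L - \<delta> * (R - r) + C"
    and "0 \<le> u" "0 \<le> \<gamma>" "0 \<le> D"
    and y: "y \<le> (if F u \<le> L then D * (1 + u) powr (- \<alpha>) * exp (\<gamma> * (F u - L)) else 0)"
  shows "R < u \<Longrightarrow> y \<le> 0"
    and "y \<le> D * exp (\<gamma> * C) * (1 + u) powr (- \<alpha>) * exp (- (\<gamma> * \<delta>) * (R - u))"
proof -
  show "R < u \<Longrightarrow> y \<le> 0"
    using y R_le[OF \<open>0 \<le> u\<close>] by (auto split: if_splits)
  show "y \<le> D * exp (\<gamma> * C) * (1 + u) powr (- \<alpha>) * exp (- (\<gamma> * \<delta>) * (R - u))"
  proof (cases "F u \<le> L")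
    case True
    have "\<gamma> * (F u - L) \<le> \<gamma> * (C - \<delta> * (R - u))"
      using F_le[OF \<open>0 \<le> u\<close> True] \<open>0 \<le> \<gamma>\<close> by (intro mult_left_mono) auto
    then have "exp (\<gamma> * (F u - L)) \<le> exp (\<gamma> * C) * exp (- (\<gamma> * \<delta>) * (R - u))"
      by (simp add: algebra_simps flip: exp_add)
    then have "D * (1 + u) powr (- \<alpha>) * exp (\<gamma> * (F u - L))
        \<le> D * (1 + u) powr (- \<alpha>) * (exp (\<gamma> * C) * exp (- (\<gamma> * \<delta>) * (R - u)))"
      using \<open>0 \<le> D\<close> by (intro mult_left_mono) auto
    then show ?thesis
      using y True by (simp only: ac_simps if_True)
  next
    case False
    have "0 \<le> D * exp (\<gamma> * C) * (1 + u) powr (- \<alpha>) * exp (- (\<gamma> * \<delta>) * (R - u))"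
      using \<open>0 \<le> D\<close> by (intro mult_nonneg_nonneg) auto
    then show ?thesis
      using y False by simp
  qed
qed

lemma sublevel_radius_comparable:
  fixes L R C M \<delta> :: real
  assumes "0 < \<delta>" "0 < M" "0 \<le> C" "0 \<le> L" "0 \<le> R" "\<delta> * R \<le> L + C" "L / M \<le> R"
  shows "1 / (1 + M) * (1 + L) \<le> 1 + R"
    and "1 + R \<le> (2 + (C + 1) / \<delta>) * (1 + L)"
proof -
  show "1 / (1 + M) * (1 + L) \<le> 1 + R"
    using assms by (simp add: field_simps)
  have "L + C \<le> (C + 1) * (1 + L)"
    using mult_nonneg_nonneg[OF \<open>0 \<le> C\<close> \<open>0 \<le> L\<close>] by (simp add: algebra_simps)
  then have "R * \<delta> \<le> (C + 1) * (1 + L)"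
    using assms(6) by (simp add: mult.commute)
  define X where "X = (C + 1) * (1 + L) / \<delta>"
  have "R \<le> X"
    using \<open>R * \<delta> \<le> _\<close> \<open>0 < \<delta>\<close> by (simp add: X_def pos_le_divide_eq)
  then have "1 + R \<le> 2 * (1 + L) + X"
    using \<open>0 \<le> L\<close> by simp
  also have "\<dots> = (2 + (C + 1) / \<delta>) * (1 + L)"
    using \<open>0 < \<delta>\<close> by (simp add: X_def field_simps)
  finally show "1 + R \<le> (2 + (C + 1) / \<delta>) * (1 + L)" .
qed

lemma nn_integral_sublevel_le:
  fixes F :: "real \<Rightarrow> real"
  assumes cont: "\<And>T. continuous_on {0..T} F"
    and growth: "\<And>r s. 0 \<le> r \<Longrightarrow> r \<le> s \<Longrightarrow> \<delta> * (s - r) - C \<le> F s - F r"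
    and F_0: "F 0 = 0" and F_upper: "\<And>r. 0 \<le> r \<Longrightarrow> F r \<le> M * r"
    and "0 < \<delta>" "0 < M" "0 \<le> \<alpha>" "0 < \<gamma>" "0 \<le> D"
  obtains Cst where "\<And>(f :: 'a::euclidean_space \<Rightarrow> real) L. 0 \<le> L \<Longrightarrow>
      (\<And>x. f x \<le> (if F (norm x) \<le> L then D * (1 + norm x) powr (- \<alpha>) * exp (\<gamma> * (F (norm x) - L))
                     else 0)) \<Longrightarrow>
      (\<integral>\<^sup>+x. ennreal (f x) \<partial>lborel) \<le> ennreal (Cst * (1 + L) powr (real DIM('a) - 1 - \<alpha>))"
proof -
  define \<beta> where "\<beta> = real DIM('a) - 1 - \<alpha>"
  have "0 \<le> C"
    using growth[of 0 0] by simp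
  obtain Cst where Cst: "\<And>(f :: 'a \<Rightarrow> real) R. 0 \<le> R \<Longrightarrow>
      (\<And>x. R < norm x \<Longrightarrow> f x \<le> 0) \<Longrightarrow>
      (\<And>x. norm x \<le> R \<Longrightarrow> f x \<le> D * exp (\<gamma> * C) * (1 + norm x) powr (- \<alpha>) * exp (- (\<gamma> * \<delta>) * (R - norm x))) \<Longrightarrow>
      (\<integral>\<^sup>+x. ennreal (f x) \<partial>lborel) \<le> ennreal (Cst * (1 + R) powr \<beta>)"
    using nn_integral_radial_decay_le[of \<alpha> "\<gamma> * \<delta>" "D * exp (\<gamma> * C)"] assms unfolding \<beta>_def
    by auto
  define a where "a = 1 / (1 + M)"
  define b where "b = 2 + (C + 1) / \<delta>"
  show ?thesis
  proof
    fix f :: "'a \<Rightarrow> real" and L :: real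
    assume "0 \<le> L"
      and f: "\<And>x. f x \<le> (if F (norm x) \<le> L then D * (1 + norm x) powr (- \<alpha>) * exp (\<gamma> * (F (norm x) - L)) else 0)"
    obtain R where "0 \<le> R" "\<delta> * R \<le> L + C"
      and R_le: "\<And>r. 0 \<le> r \<Longrightarrow> F r \<le> L \<Longrightarrow> r \<le> R"
      and F_le: "\<And>r. 0 \<le> r \<Longrightarrow> F r \<le> L \<Longrightarrow> F r \<le> L - \<delta> * (R - r) + C"
      using sublevel_radius[OF cont growth \<open>0 < \<delta>\<close>, of L] \<open>0 \<le> L\<close> F_0 by auto
    have "L / M \<le> R"
      using R_le[of "L / M"] F_upper[of "L / M"] \<open>0 \<le> L\<close> \<open>0 < M\<close> by auto
    note comparable = sublevel_radius_comparable[OF \<open>0 < \<delta>\<close> \<open>0 < M\<close> \<open>0 \<le> C\<close> \<open>0 \<le> L\<close> \<open>0 \<le> R\<close>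
        \<open>\<delta> * R \<le> L + C\<close> this]
    have "(\<integral>\<^sup>+x. ennreal (f x) \<partial>lborel) \<le> ennreal (Cst * (1 + R) powr \<beta>)"
    proof (rule Cst[OF \<open>0 \<le> R\<close>])
      fix x :: 'a
      show "f x \<le> 0" if "R < norm x"
        by (rule sublevel_profile_le(1)[where F = F and L = L and R = R and u = "norm x" and y = "f x"])
          (use R_le F_le that f[of x] \<open>0 < \<gamma>\<close> \<open>0 \<le> D\<close> in auto)
      show "f x \<le> D * exp (\<gamma> * C) * (1 + norm x) powr (- \<alpha>) * exp (- (\<gamma> * \<delta>) * (R - norm x))"
        if "norm x \<le> R"
        by (rule sublevel_profile_le(2)[where F = F and L = L and R = R and u = "norm x" and y = "f x"])
          (use R_le F_le f[of x] \<open>0 < \<gamma>\<close> \<open>0 \<le> D\<close> in auto)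
    qed
    also have "\<dots> \<le> ennreal (\<bar>Cst\<bar> * ((a powr \<beta> + b powr \<beta>) * (1 + L) powr \<beta>))"
      using comparable \<open>0 < M\<close> \<open>0 \<le> L\<close> \<open>0 \<le> R\<close>
      by (intro ennreal_leI mult_mono powr_le_of_comparable) (auto simp: a_def b_def)
    finally show "(\<integral>\<^sup>+x. ennreal (f x) \<partial>lborel)
        \<le> ennreal (\<bar>Cst\<bar> * (a powr \<beta> + b powr \<beta>) * (1 + L) powr (real DIM('a) - 1 - \<alpha>))"
      by (simp add: \<beta>_def mult.assoc)
  qed
qed

lemma powr_le_of_le_mult_exp:
  fixes y a u p e q :: real
  assumes "0 \<le> y" "y \<le> a * u powr p * exp e" "0 < u" "0 \<le> q"
  shows "y powr q \<le> a powr q * u powr (p * q) * exp (q * e)"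
proof -
  have "0 \<le> a * (u powr p * exp e)"
    using order_trans[OF assms(1,2)] by (simp add: mult.assoc)
  moreover have "0 < u powr p * exp e"
    using \<open>0 < u\<close> by simp
  ultimately have "0 \<le> a"
    by (simp add: zero_le_mult_iff)
  have "y powr q \<le> (a * u powr p * exp e) powr q"
    using assms by (intro powr_mono2) auto
  also have "\<dots> = a powr q * u powr (p * q) * exp (q * e)"
    using \<open>0 \<le> a\<close> by (simp add: powr_mult powr_powr exp_powr_real mult.commute)
  finally show ?thesis .
qed

lemma product_powr_le:
  fixes v p A c E G L lam r \<kappa> q :: real
  assumes "0 \<le> v" "v \<le> A * exp (- lam * E)"
    and "0 \<le> p" "p \<le> c * jb (lam * r) powr (- \<kappa>) * exp (lam * G)"
    and "0 < lam" "0 \<le> r" "0 \<le> \<kappa>" "0 \<le> q"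
  shows "(v * p) powr q \<le> (A * c * (min 1 lam / 2) powr (- \<kappa>) * exp (lam * (L - E))) powr q
           * (1 + r) powr (- \<kappa> * q) * exp (q * (lam * (G - L)))"
proof (rule powr_le_of_le_mult_exp)
  define \<mu> where "\<mu> = min 1 lam / 2"
  have "0 < \<mu>"
    using \<open>0 < lam\<close> by (simp add: \<mu>_def)
  have "jb (lam * r) powr (- \<kappa>) \<le> (\<mu> * (1 + r)) powr (- \<kappa>)"
    using jb_mult_lower[OF \<open>0 < lam\<close> \<open>0 \<le> r\<close>] \<open>0 < \<mu>\<close> assms
    by (intro powr_mono2') (auto simp: \<mu>_def)
  moreover have "0 \<le> c"
    using order_trans[OF assms(3,4)] jb_ge_1[of "lam * r"] by (auto simp: zero_le_mult_iff)
  ultimately have "c * jb (lam * r) powr (- \<kappa>) * exp (lam * G)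
      \<le> c * (\<mu> powr (- \<kappa>) * (1 + r) powr (- \<kappa>)) * exp (lam * G)"
    using \<open>0 < \<mu>\<close> \<open>0 \<le> r\<close> by (intro mult_right_mono mult_left_mono) (auto simp: powr_mult)
  then have "p \<le> c * (\<mu> powr (- \<kappa>) * (1 + r) powr (- \<kappa>)) * exp (lam * G)"
    using assms(4) by linarith
  then have "v * p \<le> A * exp (- lam * E) * (c * (\<mu> powr (- \<kappa>) * (1 + r) powr (- \<kappa>)) * exp (lam * G))"
    using assms(1-3) by (intro mult_mono) auto
  also have "\<dots> = A * c * \<mu> powr (- \<kappa>) * exp (lam * (L - E)) * (1 + r) powr (- \<kappa>) * exp (lam * (G - L))"
    by (simp add: algebra_simps flip: exp_add)
  finally show "v * p \<le> A * c * (min 1 lam / 2) powr (- \<kappa>) * exp (lam * (L - E)) * (1 + r) powr (- \<kappa>)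
      * exp (lam * (G - L))"
    by (simp add: \<mu>_def)
qed (use assms in auto)

lemma integrand_le_profile:
  fixes F :: "real \<Rightarrow> real" and \<phi> w :: "'a::real_normed_vector \<Rightarrow> real"
  assumes "0 \<le> v" "v \<le> A * exp (- lam * E)"
    and "0 \<le> \<phi> x" "\<phi> x \<le> c * jb (lam * norm x) powr (- \<kappa>) * exp (lam * F (norm x))"
    and "w x \<le> V" "0 < lam" "0 \<le> \<kappa>" "0 \<le> q"
  shows "indicator {x. F (norm x) \<le> L} x * (v * \<phi> x) powr q * w x
    \<le> (if F (norm x) \<le> L
       then (A * c * (min 1 lam / 2) powr (- \<kappa>) * exp (lam * (L - E))) powr q * max V 0
         * (1 + norm x) powr (- (\<kappa> * q)) * exp (q * lam * (F (norm x) - L))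
       else 0)"
proof -
  have "(v * \<phi> x) powr q * w x \<le> (v * \<phi> x) powr q * max V 0"
    using assms(5) by (intro mult_left_mono) auto
  also have "\<dots> \<le> (A * c * (min 1 lam / 2) powr (- \<kappa>) * exp (lam * (L - E))) powr q
      * (1 + norm x) powr (- \<kappa> * q) * exp (q * (lam * (F (norm x) - L))) * max V 0"
    using assms by (intro mult_right_mono product_powr_le) auto
  finally show ?thesis
    by (simp add: indicator_def ac_simps)
qed

context time_change
begin

lemma nn_integral_sublevel_product_powr_le:
  fixes K :: "real \<Rightarrow> real" and \<phi> w :: "'a::euclidean_space \<Rightarrow> real" and vphi :: "real \<Rightarrow> real"
  assumes K_cont: "continuous_on {0..} K" and "0 < \<rho>"
    and K_decay: "\<forall>r\<ge>0. \<bar>K r - 1\<bar> \<le> CK * jb r powr (- \<rho>)"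
    and vphi: "\<And>t. 0 \<le> t \<Longrightarrow> 0 \<le> vphi t" "\<And>t. 0 \<le> t \<Longrightarrow> vphi t \<le> A * exp (- lam * etafun b t)"
    and phi: "\<And>x. 0 \<le> \<phi> x"
      "\<And>x. \<phi> x \<le> c * jb (lam * norm x) powr (- \<kappa>) * exp (lam * integral {0..norm x} K)"
    and w: "\<And>x. w x \<le> V"
    and "0 < lam" "0 \<le> R1" "0 \<le> \<kappa>" "0 < q"
  obtains C where "\<And>t. 0 \<le> t \<Longrightarrow>
      (\<integral>\<^sup>+x. ennreal (indicator {x. integral {0..norm x} K \<le> etafun b t + R1} x
          * (vphi t * \<phi> x) powr q * w x) \<partial>lborel)
      \<le> ennreal (C * (t + 1) powr (real DIM('a) - 1 - \<kappa> * q))"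
proof -
  define F where "F r = integral {0..r} K" for r
  have F_eq: "F = (\<lambda>r. integral {0..r} K)"
    by (simp add: F_def fun_eq_iff)
  obtain M C' where "0 < M" and F_cont: "\<And>T. continuous_on {0..T} F"
    and F_growth: "\<And>r s. 0 \<le> r \<Longrightarrow> r \<le> s \<Longrightarrow> 1/2 * (s - r) - C' \<le> F s - F r"
    and F_upper: "\<And>r. 0 \<le> r \<Longrightarrow> F r \<le> M * r"
    using primitive_growth_bounds[OF K_cont \<open>0 < \<rho>\<close> K_decay] unfolding F_eq by blast
  define D where "D = (A * c * (min 1 lam / 2) powr (- \<kappa>) * exp (lam * R1)) powr q * max V 0"
  obtain Cst where Cst: "\<And>(f :: 'a \<Rightarrow> real) L. 0 \<le> L \<Longrightarrow>
      (\<And>x. f x \<le> (if F (norm x) \<le> L then D * (1 + norm x) powr (- (\<kappa> * q)) * exp (q * lam * (F (norm x) - L))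
                     else 0)) \<Longrightarrow>
      (\<integral>\<^sup>+x. ennreal (f x) \<partial>lborel) \<le> ennreal (Cst * (1 + L) powr (real DIM('a) - 1 - \<kappa> * q))"
    using nn_integral_sublevel_le[OF F_cont F_growth _ F_upper, of "\<kappa> * q" "q * lam" D]
      \<open>0 < M\<close> \<open>0 \<le> \<kappa>\<close> \<open>0 < q\<close> \<open>0 < lam\<close>
    by (auto simp: F_def D_def)
  define \<beta> where "\<beta> = real DIM('a) - 1 - \<kappa> * q"
  define a where "a = min 1 (exp (- L1_norm b))"
  define a' where "a' = 1 + R1 + exp (L1_norm b)"
  show ?thesis
  proof
    fix t :: real assume "0 \<le> t"
    define L where "L = etafun b t + R1"
    have "0 \<le> L" "L - etafun b t = R1"
      using etafun_nonneg[OF \<open>0 \<le> t\<close>] \<open>0 \<le> R1\<close> by (simp_all add: L_def)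
    have "(\<integral>\<^sup>+x. ennreal (indicator {x. F (norm x) \<le> L} x * (vphi t * \<phi> x) powr q * w x) \<partial>lborel)
        \<le> ennreal (Cst * (1 + L) powr \<beta>)"
      unfolding \<beta>_def
    proof (rule Cst[OF \<open>0 \<le> L\<close>])
      fix x :: 'a
      show "indicator {x. F (norm x) \<le> L} x * (vphi t * \<phi> x) powr q * w x
          \<le> (if F (norm x) \<le> L then D * (1 + norm x) powr (- (\<kappa> * q)) * exp (q * lam * (F (norm x) - L)) else 0)"
        using integrand_le_profile[where \<phi> = \<phi> and x = x and w = w and F = F and L = L,
            OF vphi[OF \<open>0 \<le> t\<close>] phi[of x, folded F_def] w \<open>0 < lam\<close> \<open>0 \<le> \<kappa>\<close>
            less_imp_le[OF \<open>0 < q\<close>]]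
        unfolding \<open>L - etafun b t = R1\<close> D_def .
    qed
    also have "\<dots> \<le> ennreal (\<bar>Cst\<bar> * ((a powr \<beta> + a' powr \<beta>) * (t + 1) powr \<beta>))"
      using etafun_shift_comparable[OF \<open>0 \<le> t\<close> \<open>0 \<le> R1\<close>] \<open>0 \<le> t\<close> \<open>0 \<le> L\<close>
      by (intro ennreal_leI mult_mono powr_le_of_comparable) (auto simp: a_def a'_def L_def)
    finally show "(\<integral>\<^sup>+x. ennreal (indicator {x. integral {0..norm x} K \<le> etafun b t + R1} x
          * (vphi t * \<phi> x) powr q * w x) \<partial>lborel)
        \<le> ennreal (\<bar>Cst\<bar> * (a powr \<beta> + a' powr \<beta>) * (t + 1) powr (real DIM('a) - 1 - \<kappa> * q))"
      by (simp add: F_def L_def \<beta>_def mult.assoc)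
  qed
qed

end

theorem lemma3p1:
  fixes g g2 :: "real^'n::finite \<Rightarrow> real^'n^'n"
    and K K1 K2 :: "real \<Rightarrow> real"
    and \<rho> :: real
    and b :: "real \<Rightarrow> real"
    and lam c R1 :: real
    and \<phi> :: "real^'n \<Rightarrow> real"
    and vphi vphi1 :: "real \<Rightarrow> real"
  assumes dim: "CARD('n) \<ge> 2"
    (* asymptotically Euclidean manifold (R^n, g), g = g1 + g2 *)
    and metric: "riemannian_metric g"
    and decomp: "\<forall>x. x \<noteq> 0 \<longrightarrow> g x = polar_metric K x + g2 x"
    and rho_pos: "\<rho> > 0"
    and K_deriv: "\<forall>r\<ge>0. (K has_real_derivative K1 r) (at r within {0..})
                       \<and> (K1 has_real_derivative K2 r) (at r within {0..})"
    and K_bounds: "\<exists>C. \<forall>r\<ge>0. \<bar>K r - 1\<bar> \<le> C * jb r powr (-\<rho>)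
                              \<and> \<bar>K1 r\<bar> \<le> C * jb r powr (-1 - \<rho>)
                              \<and> \<bar>K2 r\<bar> \<le> C * jb r powr (-2 - \<rho>)"
    and g2_C2: "\<forall>j k. C2_Rn (\<lambda>x. g2 x $ j $ k)"
    and g2_bounds: "\<exists>C. \<forall>j k x. \<bar>g2 x $ j $ k\<bar> \<le> C * jb (norm x) powr (-\<rho> - 1)
                      \<and> (\<forall>i. \<bar>pd i (\<lambda>y. g2 y $ j $ k) x\<bar> \<le> C * jb (norm x) powr (-\<rho> - 2))
                      \<and> (\<forall>i l. \<bar>pd i (pd l (\<lambda>y. g2 y $ j $ k)) x\<bar> \<le> C * jb (norm x) powr (-\<rho> - 3))"
    (* b in L^1(R_+) *)
    and b_L1: "b absolutely_integrable_on {0..}"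
    (* hypothesis (H) *)
    and lam_pos: "lam > 0" and c_pos: "c > 0"
    and phi_C2: "C2_Rn \<phi>"
    and phi_eq: "\<forall>x. laplace_beltrami g \<phi> x = lam\<^sup>2 * \<phi> x"
    and phi_nontriv: "\<exists>x. \<phi> x \<noteq> 0"
    and phi_bounds: "\<forall>x. 0 \<le> \<phi> x \<and> \<phi> x \<le> c * jb (lam * norm x) powr (- (real CARD('n) - 1) / 2)
                                      * exp (lam * integral {0..norm x} K)"
    (* the time solution varphi with derivative varphi1 *)
    and vphi_ode: "\<forall>t\<ge>0. (vphi has_real_derivative vphi1 t) (at t within {0..})
                     \<and> (vphi1 has_real_derivative lam\<^sup>2 * (mtilde b t)\<^sup>2 * vphi t) (at t within {0..})"
    and vphi_asym: "\<exists>t0\<ge>0.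
          ((\<lambda>t. vphi t * exp (lam * integral {t0..t} (mtilde b))) \<longlongrightarrow> 1) at_top
        \<and> ((\<lambda>t. vphi1 t * exp (lam * integral {t0..t} (mtilde b))) \<longlongrightarrow> - lam * kconst b) at_top"
    and R1_pos: "R1 > 0"
  shows "\<forall>q\<ge>1. \<exists>C. \<forall>t\<ge>0.
           (\<integral>\<^sup>+ x. ennreal (indicator {x. integral {0..norm x} K \<le> etafun b t + R1} x
                   * (vphi t * \<phi> x) powr q * vol_density g x) \<partial>lborel)
           \<le> ennreal (C * (t + 1) powr (real CARD('n) - 1 - (real CARD('n) - 1) / 2 * q))"
proof (intro allI impI)
  fix q :: real assume "1 \<le> q"
  interpret time_change b
    by unfold_locales (rule b_L1)
  obtain CK where K_decay: "\<forall>r\<ge>0. \<bar>K r - 1\<bar> \<le> CK * jb r powr (- \<rho>)"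
    using K_bounds by blast
  have K_cont: "continuous_on {0..} K"
    using K_deriv unfolding continuous_on_eq_continuous_within by (auto intro: DERIV_continuous)
  obtain A where vphi: "\<And>t. 0 \<le> t \<Longrightarrow> 0 \<le> vphi t" "\<And>t. 0 \<le> t \<Longrightarrow> vphi t \<le> A * exp (- lam * etafun b t)"
    using time_solution_decay[OF lam_pos vphi_ode vphi_asym] by metis
  obtain Cg where "\<And>x j k. \<bar>g2 x $ j $ k\<bar> \<le> Cg * jb (norm x) powr (- \<rho> - 1)"
    using g2_bounds by blast
  then obtain V where V: "\<And>x. vol_density g x \<le> V"
    using vol_density_bounded[OF decomp less_imp_le[OF rho_pos] K_decay] by metis
  have phi: "\<And>x. 0 \<le> \<phi> x"
    "\<And>x. \<phi> x \<le> c * jb (lam * norm x) powr (- ((real CARD('n) - 1) / 2)) * exp (lam * integral {0..norm x} K)"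
    using phi_bounds by (simp_all add: minus_divide_left)
  have exponents: "0 \<le> (real CARD('n) - 1) / 2" "0 < q"
    using dim \<open>1 \<le> q\<close> by auto
  show "\<exists>C. \<forall>t\<ge>0. (\<integral>\<^sup>+ x. ennreal (indicator {x. integral {0..norm x} K \<le> etafun b t + R1} x
                   * (vphi t * \<phi> x) powr q * vol_density g x) \<partial>lborel)
           \<le> ennreal (C * (t + 1) powr (real CARD('n) - 1 - (real CARD('n) - 1) / 2 * q))"
    by (rule nn_integral_sublevel_product_powr_le[where w = "vol_density g", OF K_cont rho_pos K_decay
          vphi phi V lam_pos less_imp_le[OF R1_pos] exponents]) auto
qed

end
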